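(* Under the RS-GBM model with two regimes $E=\{1,2\}$ and two futures with maturities $T_1<T_2$, assume $\tilde q_{12},\tilde q_{21}\ge 0$. Then for each $i\in\{1,2\}$ and $x\in\mathbb R$, the $2\times 2$ coefficient matrix $$\boldsymbol\Gamma(t,x,i)=e^x\begin{pmatrix}\sigma_ig^{(1)}_i(t)&\sigma_ig^{(2)}_i(t)\\ g^{(1)}_j(t)-g^{(1)}_i(t)& g^{(2)}_j(t)-g^{(2)}_i(t)\end{pmatrix},\quad j\ne i,$$ which has determinant $e^{2x}\sigma_i\big(g^{(1)}_i(t)g^{(2)}_j(t)-g^{(1)}_j(t)g^{(2)}_i(t)\big)$, is invertible for all $t\in[0,T_1]$ if and only if $\mu_1+\frac{\sigma_1^2}{2}\neq\mu_2+\frac{\sigma_2^2}{2}$. If instead $\mu_1+\frac{\sigma_1^2}{2}=\mu_2+\frac{\sigma_2^2}{2}$, then $g^{(m)}_1=g^{(m)}_2$ for each $m$, i.e. the futures prices coincide in both regimes.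
   Context: RS-GBM model: $\xi$ is a two-state Markov chain with generator $\tilde{\mathbf Q}$ under $\mathbb Q$; $dX_t=\mu(\xi_t)dt+\sigma(\xi_t)dZ^{\mathbb Q}_t$ with $Z^{\mathbb Q}$ a $\mathbb Q$-Brownian motion independent of $\xi$, $\mu_k=\mu(k)$, $\sigma_k=\sigma(k)>0$. For maturity $T_m$, $g^{(m)}_k(t)=\mathbb E^{\mathbb Q}[\exp(\int_t^{T_m}(\mu(\xi_s)+\sigma^2(\xi_s)/2)ds)\mid\xi_t=k]$, so that the futures price is $F^{(m)}_k(t,x)=e^xg^{(m)}_k(t)$. *)

theory Defs
  imports "HOL-Analysis.Analysis"
begin

fun mpow :: "real^'n^'n \<Rightarrow> nat \<Rightarrow> real^'n^'n" where
  "mpow A 0 = mat 1"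
| "mpow A (Suc n) = A ** mpow A n"

definition gen2 :: "real \<Rightarrow> real \<Rightarrow> real^2^2" where
  "gen2 q12 q21 = (\<chi> k l. if k = 1 then (if l = 1 then - q12 else q12)
                              else (if l = 1 then q21 else - q21))"

definition fkmat :: "real \<Rightarrow> real \<Rightarrow> (2 \<Rightarrow> real) \<Rightarrow> (2 \<Rightarrow> real) \<Rightarrow> real^2^2" where
  "fkmat q12 q21 mu sig =
     gen2 q12 q21 + (\<chi> k l. if k = l then mu k + (sig k)^2 / 2 else 0)"

text \<open>g^{(m)}_k(t) = E[exp(int_t^{Tm} (mu + sigma^2/2)(xi_s) ds) | xi_t = k],
  given by the Feynman-Kac formula for finite-state Markov chains as the
  k-th entry of exp((Tm - t)(Q + diag(mu + sigma^2/2))) applied to the ones vector.\<close>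
definition gfun :: "real \<Rightarrow> real \<Rightarrow> (2 \<Rightarrow> real) \<Rightarrow> (2 \<Rightarrow> real) \<Rightarrow> real \<Rightarrow> 2 \<Rightarrow> real \<Rightarrow> real" where
  "gfun q12 q21 mu sig Tm k t =
     (\<Sum>n. (Tm - t)^n / fact n * ((mpow (fkmat q12 q21 mu sig) n *v (\<chi> l. 1)) $ k))"

definition other :: "2 \<Rightarrow> 2" where
  "other i = (if i = 1 then 2 else 1)"

definition Gamma :: "real \<Rightarrow> real \<Rightarrow> (2 \<Rightarrow> real) \<Rightarrow> (2 \<Rightarrow> real) \<Rightarrow> real \<Rightarrow> real
                     \<Rightarrow> real \<Rightarrow> real \<Rightarrow> 2 \<Rightarrow> real^2^2" where
  "Gamma q12 q21 mu sig T1 T2 t x i =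
     (let g = (\<lambda>Tm k. gfun q12 q21 mu sig Tm k t); j = other i in
      exp x *\<^sub>R (\<chi> r c. if r = 1
                        then sig i * g (if c = 1 then T1 else T2) i
                        else g (if c = 1 then T1 else T2) j - g (if c = 1 then T1 else T2) i))"

end

theory Submission
  imports Defs
begin

text \<open>Write \<open>a\<^sub>k = \<mu>\<^sub>k + \<sigma>\<^sub>k\<^sup>2/2\<close> and \<open>M = Q + diag a\<close>, so that \<open>M 1 = a\<close>. Since
  \<open>q\<^sub>1\<^sub>2 q\<^sub>2\<^sub>1 \<ge> 0\<close>, \<open>M\<close> has real eigenvalues \<open>l\<^sub>1, l\<^sub>2\<close>, and by Cayley--Hamilton
  \<open>M\<^sup>n 1 = l\<^sub>2\<^sup>n 1 + d\<^sub>n (a - l\<^sub>2 1)\<close> with the divided differences \<open>d\<^sub>n = (l\<^sub>1\<^sup>n - l\<^sub>2\<^sup>n)/(l\<^sub>1 - l\<^sub>2)\<close>.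
  Summing the exponential series, \<open>g\<^sub>k(t) = e\<^bsup>l\<^sub>2 s\<^esup> + \<beta>(s) (a\<^sub>k - l\<^sub>2)\<close> with \<open>s = T\<^sub>m - t\<close>
  and \<open>\<beta>(s) = (e\<^bsup>l\<^sub>1 s\<^esup> - e\<^bsup>l\<^sub>2 s\<^esup>)/(l\<^sub>1 - l\<^sub>2)\<close>. Hence \<open>g\<^sub>j - g\<^sub>i = \<beta> (a\<^sub>j - a\<^sub>i)\<close>, and the
  determinant of \<open>\<Gamma>\<close> is \<open>e\<^bsup>2x\<^esup> \<sigma>\<^sub>i (a\<^sub>j - a\<^sub>i) (e\<^bsup>l\<^sub>2 u\<^esup> \<beta>(v) - e\<^bsup>l\<^sub>2 v\<^esup> \<beta>(u))\<close> with
  \<open>u = T\<^sub>1 - t < v = T\<^sub>2 - t\<close>; the last factor is positive because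
  \<open>e\<^bsup>-l\<^sub>2 s\<^esup> \<beta>(s) = \<integral>\<^sub>0\<^sup>s e\<^bsup>(l\<^sub>1 - l\<^sub>2) r\<^esup> dr\<close> is strictly increasing.\<close>

lemma sums_exp_real: "(\<lambda>n. x ^ n / fact n) sums exp (x::real)"
  using exp_converges[of x] by (simp add: divide_inverse_commute)

fun pow_divdiff :: "real \<Rightarrow> real \<Rightarrow> nat \<Rightarrow> real" where
  "pow_divdiff l1 l2 0 = 0"
| "pow_divdiff l1 l2 (Suc n) = l1 * pow_divdiff l1 l2 n + l2 ^ n"

lemma pow_divdiff_distinct:
  assumes "l1 \<noteq> l2"
  shows "pow_divdiff l1 l2 n = (l1 ^ n - l2 ^ n) / (l1 - l2)"
proof (induction n)
  case (Suc n)
  have "l1 * ((l1 ^ n - l2 ^ n) / (l1 - l2)) + l2 ^ n = (l1 ^ Suc n - l2 ^ Suc n) / (l1 - l2)"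
    using assms by (simp add: field_simps)
  then show ?case
    by (simp add: Suc.IH)
qed simp

lemma pow_divdiff_same: "pow_divdiff l l n = real n * l ^ (n - 1)"
  by (induction n) (auto simp: algebra_simps power_eq_if)

definition exp_divdiff :: "real \<Rightarrow> real \<Rightarrow> real \<Rightarrow> real" where
  "exp_divdiff l1 l2 s =
     (if l1 = l2 then s * exp (l1 * s) else (exp (l1 * s) - exp (l2 * s)) / (l1 - l2))"

lemma sums_exp_divdiff: "(\<lambda>n. s ^ n / fact n * pow_divdiff l1 l2 n) sums exp_divdiff l1 l2 s"
proof (cases "l1 = l2")
  case True
  have shift: "s ^ Suc n / fact (Suc n) * pow_divdiff l1 l2 (Suc n) = s * ((l1 * s) ^ n / fact n)"
    for n
  proof -
    have "fact (Suc n) = real (Suc n) * fact n"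
      by simp
    then show ?thesis
      using True by (simp add: pow_divdiff_same power_mult_distrib del: of_nat_Suc)
  qed
  have "(\<lambda>n. s * ((l1 * s) ^ n / fact n)) sums exp_divdiff l1 l2 s"
    using True sums_mult[OF sums_exp_real[of "l1 * s"], of s] by (simp add: exp_divdiff_def)
  then have "(\<lambda>n. s ^ Suc n / fact (Suc n) * pow_divdiff l1 l2 (Suc n)) sums exp_divdiff l1 l2 s"
    by (simp only: shift)
  then show ?thesis
    by (rule sums_Suc_imp[rotated]) simp
next
  case False
  let ?a = "\<lambda>n. ((l1 * s) ^ n / fact n - (l2 * s) ^ n / fact n) / (l1 - l2)"
  have "?a sums exp_divdiff l1 l2 s"
    using False unfolding exp_divdiff_def by (simp add: sums_divide sums_diff sums_exp_real)
  also have "?a = (\<lambda>n. s ^ n / fact n * pow_divdiff l1 l2 n)"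
    using False by (simp add: fun_eq_iff pow_divdiff_distinct power_mult_distrib field_simps)
  finally show ?thesis .
qed

lemma exp_divdiff_cross_less:
  assumes "u < v"
  shows "exp (l2 * v) * exp_divdiff l1 l2 u < exp (l2 * u) * exp_divdiff l1 l2 v"
proof (cases "l1 = l2")
  case True
  then show ?thesis
    using assms by (simp add: exp_divdiff_def mult.left_commute)
next
  case False
  define X where "X = l2 * u + l1 * v"
  define Y where "Y = l1 * u + l2 * v"
  have XY: "X - Y = (l1 - l2) * (v - u)"
    by (simp add: X_def Y_def algebra_simps)
  have "0 < (exp X - exp Y) / (l1 - l2)"
  proof (cases "l2 < l1")
    case True
    then have "Y < X"
      using XY assms by (smt (verit) mult_pos_pos)
    then show ?thesis
      using True by (simp add: divide_pos_pos)
  next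
    case False
    then have "l1 < l2"
      using \<open>l1 \<noteq> l2\<close> by simp
    then have "X < Y"
      using XY assms by (smt (verit) mult_neg_pos)
    then show ?thesis
      using \<open>l1 < l2\<close> by (simp add: divide_neg_neg)
  qed
  also have "(exp X - exp Y) / (l1 - l2)
      = (exp (l2 * u) * (exp (l1 * v) - exp (l2 * v)) - exp (l2 * v) * (exp (l1 * u) - exp (l2 * u)))
        / (l1 - l2)"
    by (simp add: X_def Y_def exp_add algebra_simps)
  also have "\<dots> = exp (l2 * u) * exp_divdiff l1 l2 v - exp (l2 * v) * exp_divdiff l1 l2 u"
    using False by (simp add: exp_divdiff_def diff_divide_distrib right_diff_distrib)
  finally show ?thesis
    by simp
qed

lemma real_eigenvalues_2:
  fixes M :: "real^2^2"
  assumes "0 \<le> M$1$2 * M$2$1"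
  obtains l1 l2 where "l1 + l2 = trace M" and "l1 * l2 = det M"
proof -
  define r where "r = sqrt ((M$1$1 - M$2$2)\<^sup>2 + 4 * (M$1$2 * M$2$1))"
  have "r\<^sup>2 = (M$1$1 - M$2$2)\<^sup>2 + 4 * (M$1$2 * M$2$1)"
    unfolding r_def using assms by simp
  then have "(trace M + r) / 2 * ((trace M - r) / 2) = det M"
    by (simp add: trace_def det_2 sum_2 power2_eq_square field_simps)
  moreover have "(trace M + r) / 2 + (trace M - r) / 2 = trace M"
    by (simp add: field_simps)
  ultimately show thesis
    by (rule that[rotated])
qed

lemma cayley_hamilton_2:
  fixes M :: "real^2^2"
  assumes "l1 + l2 = trace M" and "l1 * l2 = det M"
  shows "M *v (M *v v - l2 *\<^sub>R v) = l1 *\<^sub>R (M *v v - l2 *\<^sub>R v)"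
  using assms unfolding vec_eq_iff forall_2
  by (simp add: matrix_vector_mult_def sum_2 trace_def det_2) algebra

lemma mpow_mult_vector_2:
  fixes M :: "real^2^2"
  assumes "l1 + l2 = trace M" and "l1 * l2 = det M"
  shows "mpow M n *v v = l2 ^ n *\<^sub>R v + pow_divdiff l1 l2 n *\<^sub>R (M *v v - l2 *\<^sub>R v)"
proof (induction n)
  case (Suc n)
  have "mpow M (Suc n) *v v = M *v (mpow M n *v v)"
    by (simp add: matrix_vector_mul_assoc)
  also have "\<dots> = l2 ^ n *\<^sub>R (M *v v) + (pow_divdiff l1 l2 n * l1) *\<^sub>R (M *v v - l2 *\<^sub>R v)"
    using cayley_hamilton_2[OF assms, of v]
    by (simp add: Suc.IH matrix_vector_right_distrib matrix_vector_mult_scaleR)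
  also have "\<dots> = l2 ^ Suc n *\<^sub>R v + pow_divdiff l1 l2 (Suc n) *\<^sub>R (M *v v - l2 *\<^sub>R v)"
    by (simp add: algebra_simps)
  finally show ?case .
qed simp

lemma sums_mpow_mult_vector_2:
  fixes M :: "real^2^2"
  assumes "l1 + l2 = trace M" and "l1 * l2 = det M"
  shows "(\<lambda>n. s ^ n / fact n * (mpow M n *v v) $ k)
           sums (exp (l2 * s) * v $ k + exp_divdiff l1 l2 s * (M *v v - l2 *\<^sub>R v) $ k)"
proof -
  let ?w = "M *v v - l2 *\<^sub>R v"
  have "(\<lambda>n. (l2 * s) ^ n / fact n * v $ k + s ^ n / fact n * pow_divdiff l1 l2 n * ?w $ k)
          sums (exp (l2 * s) * v $ k + exp_divdiff l1 l2 s * ?w $ k)"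
    by (intro sums_add sums_mult2 sums_exp_real sums_exp_divdiff)
  then show ?thesis
    by (simp add: mpow_mult_vector_2[OF assms] power_mult_distrib diff_divide_distrib algebra_simps)
qed

definition growth_rate :: "(2 \<Rightarrow> real) \<Rightarrow> (2 \<Rightarrow> real) \<Rightarrow> 2 \<Rightarrow> real" where
  "growth_rate mu sig k = mu k + (sig k)\<^sup>2 / 2"

lemma fkmat_mult_ones: "fkmat q12 q21 mu sig *v (\<chi> l. 1) = (\<chi> k. growth_rate mu sig k)"
  by (simp add: vec_eq_iff forall_2 matrix_vector_mult_def sum_2 fkmat_def gen2_def growth_rate_def)

lemma gfun_spectral_form:
  assumes "0 \<le> q12" and "0 \<le> q21"
  obtains l1 l2 where "\<And>Tm k t. gfun q12 q21 mu sig Tm k t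
    = exp (l2 * (Tm - t)) + exp_divdiff l1 l2 (Tm - t) * (growth_rate mu sig k - l2)"
proof -
  let ?M = "fkmat q12 q21 mu sig"
  have "0 \<le> ?M$1$2 * ?M$2$1"
    using assms by (simp add: fkmat_def gen2_def)
  then obtain l1 l2 where eig: "l1 + l2 = trace ?M" "l1 * l2 = det ?M"
    by (rule real_eigenvalues_2)
  have "gfun q12 q21 mu sig Tm k t
      = exp (l2 * (Tm - t)) + exp_divdiff l1 l2 (Tm - t) * (growth_rate mu sig k - l2)" for Tm k t
    unfolding gfun_def
    using sums_mpow_mult_vector_2[OF eig, of "Tm - t" "\<chi> l. 1" k]
    by (simp add: fkmat_mult_ones sums_unique[symmetric])
  then show thesis
    by (rule that)
qed

lemma gfun_eq_if_growth_rate_eq: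
  assumes "0 \<le> q12" and "0 \<le> q21" and "growth_rate mu sig i = growth_rate mu sig j"
  shows "gfun q12 q21 mu sig Tm i t = gfun q12 q21 mu sig Tm j t"
proof -
  obtain l1 l2 where g: "\<And>Tm k t. gfun q12 q21 mu sig Tm k t
    = exp (l2 * (Tm - t)) + exp_divdiff l1 l2 (Tm - t) * (growth_rate mu sig k - l2)"
    using gfun_spectral_form[where mu = mu and sig = sig, OF assms(1,2)] by metis
  show ?thesis
    unfolding g assms(3) ..
qed

lemma gfun_cross_eq_0_iff:
  assumes "0 \<le> q12" and "0 \<le> q21" and "T < T'"
  shows "gfun q12 q21 mu sig T i t * gfun q12 q21 mu sig T' j t
           - gfun q12 q21 mu sig T j t * gfun q12 q21 mu sig T' i t = 0
         \<longleftrightarrow> growth_rate mu sig i = growth_rate mu sig j"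
proof -
  obtain l1 l2 where g: "\<And>Tm k t. gfun q12 q21 mu sig Tm k t
    = exp (l2 * (Tm - t)) + exp_divdiff l1 l2 (Tm - t) * (growth_rate mu sig k - l2)"
    using gfun_spectral_form[where mu = mu and sig = sig, OF assms(1,2)] by metis
  define u v where "u = T - t" and "v = T' - t"
  have "exp (l2 * v) * exp_divdiff l1 l2 u < exp (l2 * u) * exp_divdiff l1 l2 v"
    using assms(3) by (intro exp_divdiff_cross_less) (simp add: u_def v_def)
  moreover have "gfun q12 q21 mu sig T i t * gfun q12 q21 mu sig T' j t
           - gfun q12 q21 mu sig T j t * gfun q12 q21 mu sig T' i t
      = (growth_rate mu sig j - growth_rate mu sig i)
        * (exp (l2 * u) * exp_divdiff l1 l2 v - exp (l2 * v) * exp_divdiff l1 l2 u)"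
    by (simp add: g u_def v_def algebra_simps)
  ultimately show ?thesis
    by auto
qed

lemma det_Gamma:
  fixes mu sig :: "2 \<Rightarrow> real" and i :: 2
  shows "det (Gamma q12 q21 mu sig T1 T2 t x i) = (exp x)\<^sup>2 * sig i *
     (gfun q12 q21 mu sig T1 i t * gfun q12 q21 mu sig T2 (other i) t
      - gfun q12 q21 mu sig T1 (other i) t * gfun q12 q21 mu sig T2 i t)"
  by (simp add: Gamma_def det_2 power2_eq_square algebra_simps)

lemma invertible_Gamma_iff:
  fixes mu sig :: "2 \<Rightarrow> real" and i :: 2
  assumes "0 \<le> q12" and "0 \<le> q21" and "sig i \<noteq> 0" and "T1 < T2"
  shows "invertible (Gamma q12 q21 mu sig T1 T2 t x i)
         \<longleftrightarrow> growth_rate mu sig 1 \<noteq> growth_rate mu sig 2"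
proof -
  have "growth_rate mu sig i = growth_rate mu sig (other i)
        \<longleftrightarrow> growth_rate mu sig 1 = growth_rate mu sig 2"
    using exhaust_2[of i] by (auto simp: other_def)
  then show ?thesis
    using gfun_cross_eq_0_iff[OF assms(1,2,4), where i = i and j = "other i"] assms(3)
    by (simp add: invertible_det_nz det_Gamma)
qed

theorem mainTheorem7:
  fixes q12 q21 T1 T2 :: real and mu sig :: "2 \<Rightarrow> real"
  assumes "q12 \<ge> 0" and "q21 \<ge> 0"
    and "\<And>k. sig k > 0"
    and "0 < T1" and "T1 < T2"
  shows "(\<forall>i::2. \<forall>x::real.
            (\<forall>t\<in>{0..T1}. invertible (Gamma q12 q21 mu sig T1 T2 t x i))
            \<longleftrightarrow> mu 1 + (sig 1)^2 / 2 \<noteq> mu 2 + (sig 2)^2 / 2)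
       \<and> (mu 1 + (sig 1)^2 / 2 = mu 2 + (sig 2)^2 / 2 \<longrightarrow>
            (\<forall>Tm\<in>{T1, T2}. \<forall>t\<in>{0..Tm}.
               gfun q12 q21 mu sig Tm 1 t = gfun q12 q21 mu sig Tm 2 t))"
proof -
  have "invertible (Gamma q12 q21 mu sig T1 T2 t x i)
        \<longleftrightarrow> growth_rate mu sig 1 \<noteq> growth_rate mu sig 2" for t x i
    using assms(3)[of i] by (intro invertible_Gamma_iff assms(1,2,5)) simp
  moreover have "gfun q12 q21 mu sig Tm 1 t = gfun q12 q21 mu sig Tm 2 t"
    if "growth_rate mu sig 1 = growth_rate mu sig 2" for Tm t
    using that by (intro gfun_eq_if_growth_rate_eq assms(1,2))
  ultimately show ?thesis
    using assms(4) by (auto simp: growth_rate_def)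
qed

end
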